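(* Consider Algorithm 1 applied to $\min\varphi(w)$ s.t. $w\in D$, and assume that the sublevel set $\mathcal S_\varphi(w^0):=\{w\in D:\varphi(w)\le\varphi(w^0)\}$ is bounded. Then exactly one of the following occurs: (i) in some outer iteration $j$ the inner loop does not terminate; then $w^{j,i}\to w^j$ as $i\to\infty$, $w^j$ is M-stationary, and $\|\gamma_{j,i}(w^j-w^{j,i})+\nabla\varphi(w^{j,i})-\nabla\varphi(w^j)\|\to0$ as $i\to\infty$; (ii) the inner loop always terminates; then the infinite sequence $\{w^j\}$ of outer iterates has convergent subsequences, and every subsequence with $w^j\to_K\bar w$ satisfies: $\bar w$ is M-stationary and $\gamma_j(w^{j+1}-w^j)\to_K0$.
   Context: $\mathbb W$ is a Euclidean space, $\varphi\colon\mathbb W\to\mathbb R$ continuously differentiable, $D\subset\mathbb W$ nonempty and closed (neither need be convex). A point $w\in D$ is M-stationary for $\min\varphi$ over $D$ if $0\in\nabla\varphi(w)+\mathcal N^{\lim}_D(w)$, where $\mathcal N^{\lim}_D(\bar w):=\limsup_{w\to\bar w}\operatorname{cone}(w-\Pi_D(w))$ (outer set limit, $\Pi_D$ the multivalued Euclidean projection). Algorithm 1 (general spectral gradient method, without termination test): parameters $\tau>1$, $\sigma\in(0,1)$, $0<\gamma_{\min}\le\gamma_{\max}<\infty$, $m\in\mathbb N$, starting point $w^0\in D$. For $j=0,1,2,\dots$: set $m_j:=\min(j,m)$ and choose $\gamma_j^0\in[\gamma_{\min},\gamma_{\max}]$; for $i=1,2,\dots$ set $\gamma_{j,i}:=\tau^{i-1}\gamma_j^0$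 and compute a (global) solution $w^{j,i}$ of $\min_w \varphi(w^j)+\langle\nabla\varphi(w^j),w-w^j\rangle+\frac{\gamma_{j,i}}2\|w-w^j\|^2$ s.t. $w\in D$ (subproblem $Q(j,i)$); the inner loop stops at the first $i$ with $\varphi(w^{j,i})\le\max_{r=0,\dots,m_j}\varphi(w^{j-r})+\sigma\langle\nabla\varphi(w^j),w^{j,i}-w^j\rangle$; then set $i_j:=i$, $\gamma_j:=\gamma_{j,i_j}$, $w^{j+1}:=w^{j,i_j}$. *)

theory Defs
  imports "HOL-Analysis.Analysis"
begin

definition proj :: "'a::euclidean_space set \<Rightarrow> 'a \<Rightarrow> 'a set" where
  "proj D x = {z \<in> D. \<forall>y\<in>D. dist x z \<le> dist x y}"

definition proj_cone :: "'a::euclidean_space set \<Rightarrow> 'a \<Rightarrow> 'a set" where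
  "proj_cone D x = {t *\<^sub>R (x - z) | t z. t \<ge> 0 \<and> z \<in> proj D x}"

definition lim_normal :: "'a::euclidean_space set \<Rightarrow> 'a \<Rightarrow> 'a set" where
  "lim_normal D wbar = {v. \<exists>xs vs. xs \<longlonglongrightarrow> wbar \<and> vs \<longlonglongrightarrow> v \<and>
                                 (\<forall>k. vs k \<in> proj_cone D (xs k))}"

definition M_stationary :: "('a::euclidean_space \<Rightarrow> 'a) \<Rightarrow> 'a set \<Rightarrow> 'a \<Rightarrow> bool" where
  "M_stationary grad D w \<longleftrightarrow> w \<in> D \<and> (\<exists>v \<in> lim_normal D w. grad w + v = 0)"

definition gam :: "real \<Rightarrow> (nat \<Rightarrow> real) \<Rightarrow> nat \<Rightarrow> nat \<Rightarrow> real" where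
  "gam \<tau> g0 j i = \<tau> ^ (i - 1) * g0 j"

definition solves_Q :: "('a::euclidean_space \<Rightarrow> real) \<Rightarrow> ('a \<Rightarrow> 'a) \<Rightarrow> 'a set \<Rightarrow> 'a \<Rightarrow> real \<Rightarrow> 'a \<Rightarrow> bool" where
  "solves_Q \<phi> grad D wj g x \<longleftrightarrow> x \<in> D \<and>
     (\<forall>y\<in>D. \<phi> wj + grad wj \<bullet> (x - wj) + g / 2 * (norm (x - wj))\<^sup>2
             \<le> \<phi> wj + grad wj \<bullet> (y - wj) + g / 2 * (norm (y - wj))\<^sup>2)"

definition accepted :: "('a::euclidean_space \<Rightarrow> real) \<Rightarrow> ('a \<Rightarrow> 'a) \<Rightarrow> real \<Rightarrow> nat
      \<Rightarrow> (nat \<Rightarrow> 'a) \<Rightarrow> (nat \<Rightarrow> nat \<Rightarrow> 'a) \<Rightarrow> nat \<Rightarrow> nat \<Rightarrow> bool" where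
  "accepted \<phi> grad \<sigma> m w wt j i \<longleftrightarrow>
     \<phi> (wt j i) \<le> Max ((\<lambda>r. \<phi> (w (j - r))) ` {0..min j m}) + \<sigma> * (grad (w j) \<bullet> (wt j i - w j))"

definition inner_terminates where
  "inner_terminates \<phi> grad \<sigma> m w wt j \<longleftrightarrow> (\<exists>i\<ge>1. accepted \<phi> grad \<sigma> m w wt j i)"

definition inner_index where
  "inner_index \<phi> grad \<sigma> m w wt j = (LEAST i. i \<ge> 1 \<and> accepted \<phi> grad \<sigma> m w wt j i)"

definition reached where
  "reached \<phi> grad \<sigma> m w wt j \<longleftrightarrow> (\<forall>k<j. inner_terminates \<phi> grad \<sigma> m w wt k)"

text \<open>(w, wt, g0) is a run of Algorithm 1 (no termination test) started at w 0:
  w j are the outer iterates, wt j i = w^{j,i} (i \<ge> 1) the inner trial points,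
  g0 j = gamma_j^0.  Constraints are imposed only on quantities actually computed.\<close>
definition alg_run ::
  "('a::euclidean_space \<Rightarrow> real) \<Rightarrow> ('a \<Rightarrow> 'a) \<Rightarrow> 'a set \<Rightarrow> real \<Rightarrow> real \<Rightarrow> real \<Rightarrow> real \<Rightarrow> nat
   \<Rightarrow> (nat \<Rightarrow> 'a) \<Rightarrow> (nat \<Rightarrow> nat \<Rightarrow> 'a) \<Rightarrow> (nat \<Rightarrow> real) \<Rightarrow> bool" where
  "alg_run \<phi> grad D \<tau> \<sigma> gmin gmax m w wt g0 \<longleftrightarrow>
     w 0 \<in> D \<and>
     (\<forall>j. reached \<phi> grad \<sigma> m w wt j \<longrightarrow>
        g0 j \<in> {gmin..gmax} \<and>
        (\<forall>i\<ge>1. (\<forall>i'. 1 \<le> i' \<and> i' < i \<longrightarrow> \<not> accepted \<phi> grad \<sigma> m w wt j i') \<longrightarrow>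
                 solves_Q \<phi> grad D (w j) (gam \<tau> g0 j i) (wt j i)) \<and>
        (inner_terminates \<phi> grad \<sigma> m w wt j \<longrightarrow>
           w (Suc j) = wt j (inner_index \<phi> grad \<sigma> m w wt j)))"

end

theory Submission
  imports Defs
begin

(*
  A trial point w^{j,i} is a projection onto D of the gradient step
  w^j - grad phi(w^j) / gamma_{j,i}, so gamma_{j,i} (w^j - w^{j,i}) - grad phi(w^j) is a
  proximal normal to D at w^{j,i}. Whenever such points converge to some w while the scaled
  steps gamma_{j,i} (w^{j,i} - w^j) tend to 0, these normals converge to - grad phi(w), so w
  is M-stationary. Scaled steps are controlled through rejections: by the mean value theorem
  a rejected trial point satisfies
    (1 - sigma) gamma_{j,i} |w^{j,i} - w^j| <= 2 |grad phi(xi) - grad phi(w^j)|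
  for some xi between the two points, so short rejected steps have short scaled steps.

  In a stalled inner loop gamma_{j,i} grows geometrically and the trial steps shrink like
  1 / gamma_{j,i}. If all inner loops terminate, acceptance gives the sufficient decrease
    phi(w^{j+1}) <= max_{r <= m} phi(w^{j-r}) - sigma gmin / 2 |w^{j+1} - w^j|^2,
  so the window maxima decrease, the iterates stay in the compact sublevel set, and the
  argument of Grippo, Lampariello and Lucidi shows that the steps tend to 0. If the scaled
  steps did not, then along a subsequence the accepted parameters would be large, hence
  obtained by increasing a rejected one, whose step would then be short while its scaled
  step stays away from 0.
*)

section \<open>The subproblem\<close>

lemma proj_of_segment_point:
  fixes D :: "'a::euclidean_space set"
  assumes z: "z \<in> proj D y" and t: "0 < t" "t \<le> 1"
  shows "z \<in> proj D (z + t *\<^sub>R (y - z))"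
proof -
  let ?x = "z + t *\<^sub>R (y - z)"
  have "dist ?x z \<le> dist ?x u" if u: "u \<in> D" for u
  proof -
    have "y - ?x = (1 - t) *\<^sub>R (y - z)" by (simp add: algebra_simps)
    then have "dist y ?x = (1 - t) * dist y z" using t by (simp add: dist_norm)
    moreover have "dist ?x z = t * dist y z" using t by (simp add: dist_norm)
    moreover have "dist y z \<le> dist y ?x + dist ?x u"
      using z u dist_triangle[of y u ?x] unfolding proj_def by force
    ultimately show ?thesis by (simp add: algebra_simps)
  qed
  with z show ?thesis by (simp add: proj_def)
qed

lemma lim_normal_of_proj_seq:
  fixes D :: "'a::euclidean_space set"
  assumes z: "\<And>k. z k \<in> proj D (y k)" and c: "\<And>k. c k > 0"
    and z_lim: "z \<longlonglongrightarrow> wbar" and v_lim: "(\<lambda>k. c k *\<^sub>R (y k - z k)) \<longlonglongrightarrow> v"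
  shows "v \<in> lim_normal D wbar"
proof -
  \<comment> \<open>The points y k need not converge, so replace them by points of the segments
    towards z k that still project onto z k but come within 1/(k+1) of it.\<close>
  define t where "t k = inverse (real (Suc k) * (1 + norm (y k - z k)))" for k
  define x where "x k = z k + t k *\<^sub>R (y k - z k)" for k
  have t_pos: "t k > 0" for k by (simp add: t_def add_pos_nonneg)
  have t_le_1: "t k \<le> 1" for k
  proof -
    have "1 \<le> real (Suc k) * (1 + norm (y k - z k))"
      using mult_mono[of 1 "real (Suc k)" 1 "1 + norm (y k - z k)"] by simp
    then show ?thesis unfolding t_def by (meson inverse_le_1_iff)
  qed
  have "norm (t k *\<^sub>R (y k - z k)) \<le> inverse (real (Suc k))" for k
  proof -
    have "norm (t k *\<^sub>R (y k - z k)) = norm (y k - z k) / (real (Suc k) * (1 + norm (y k - z k)))"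
      using t_pos[of k] by (simp add: t_def divide_inverse)
    also have "\<dots> \<le> (1 + norm (y k - z k)) / (real (Suc k) * (1 + norm (y k - z k)))"
      by (intro divide_right_mono) (auto simp: add_pos_nonneg)
    also have "\<dots> = inverse (real (Suc k))"
    proof -
      have "1 + norm (y k - z k) > 0" by (simp add: add_pos_nonneg)
      then show ?thesis by (simp add: divide_inverse)
    qed
    finally show ?thesis .
  qed
  then have "(\<lambda>k. t k *\<^sub>R (y k - z k)) \<longlonglongrightarrow> 0"
    by (intro Lim_null_comparison[OF _ LIMSEQ_inverse_real_of_nat]) auto
  then have x_lim: "x \<longlonglongrightarrow> wbar"
    unfolding x_def using tendsto_add[OF z_lim] by fastforce
  have "c k *\<^sub>R (y k - z k) \<in> proj_cone D (x k)" for k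
  proof -
    have "c k *\<^sub>R (y k - z k) = (c k / t k) *\<^sub>R (x k - z k)"
      using t_pos[of k] by (simp add: x_def)
    moreover have "z k \<in> proj D (x k)"
      unfolding x_def by (rule proj_of_segment_point[OF z t_pos t_le_1])
    moreover have "c k / t k \<ge> 0" using c[of k] t_pos[of k] by simp
    ultimately show ?thesis unfolding proj_cone_def by blast
  qed
  then show ?thesis unfolding lim_normal_def using x_lim v_lim by blast
qed

lemma solves_Q_in_proj:
  fixes D :: "'a::euclidean_space set"
  assumes Q: "solves_Q \<phi> grad D y g x" and g: "g > 0"
  shows "x \<in> proj D (y - (1 / g) *\<^sub>R grad y)"
proof -
  let ?c = "y - (1 / g) *\<^sub>R grad y"
  \<comment> \<open>Completing the square: the model is an increasing affine function of the squared
    distance to the gradient step ?c.\<close>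
  have square: "(dist ?c u)\<^sup>2 = (2 / g) * (grad y \<bullet> (u - y) + g / 2 * (norm (u - y))\<^sup>2)
      + (norm ((1 / g) *\<^sub>R grad y))\<^sup>2" for u
  proof -
    have "dist ?c u = norm ((u - y) + (1 / g) *\<^sub>R grad y)"
      by (simp add: dist_norm norm_minus_commute algebra_simps)
    then have "(dist ?c u)\<^sup>2 = (u - y) \<bullet> (u - y) + 2 * ((1 / g) * (grad y \<bullet> (u - y)))
        + ((1 / g) *\<^sub>R grad y) \<bullet> ((1 / g) *\<^sub>R grad y)"
      by (simp add: power2_norm_eq_inner inner_add_left inner_add_right inner_commute)
    also have "\<dots> = (2 / g) * (grad y \<bullet> (u - y) + g / 2 * (norm (u - y))\<^sup>2)
        + (norm ((1 / g) *\<^sub>R grad y))\<^sup>2"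
      using g by (simp add: dot_square_norm) (simp add: field_simps power2_eq_square)
    finally show ?thesis .
  qed
  have "dist ?c x \<le> dist ?c u" if "u \<in> D" for u
  proof -
    have "grad y \<bullet> (x - y) + g / 2 * (norm (x - y))\<^sup>2
        \<le> grad y \<bullet> (u - y) + g / 2 * (norm (u - y))\<^sup>2"
      using Q that by (simp add: solves_Q_def)
    then have "(dist ?c x)\<^sup>2 \<le> (dist ?c u)\<^sup>2"
      unfolding square using g by (intro add_right_mono mult_left_mono) auto
    then show ?thesis by (rule power2_le_imp_le) simp
  qed
  with Q show ?thesis by (simp add: proj_def solves_Q_def)
qed

lemma solves_Q_model_nonpos:
  assumes "solves_Q \<phi> grad D y g x" and "y \<in> D"
  shows "grad y \<bullet> (x - y) + g / 2 * (norm (x - y))\<^sup>2 \<le> 0"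
  using assms unfolding solves_Q_def by force

lemma solves_Q_step_bound:
  assumes Q: "solves_Q \<phi> grad D y g x" and y: "y \<in> D" and g: "g > 0"
  shows "g * norm (x - y) \<le> 2 * norm (grad y)"
proof -
  have "g / 2 * (norm (x - y))\<^sup>2 \<le> - (grad y \<bullet> (x - y))"
    using solves_Q_model_nonpos[OF Q y] by linarith
  also have "\<dots> \<le> norm (grad y) * norm (x - y)"
    by (metis Cauchy_Schwarz_ineq2 abs_le_iff)
  finally have "(g * norm (x - y)) * norm (x - y) \<le> (2 * norm (grad y)) * norm (x - y)"
    by (simp add: power2_eq_square algebra_simps)
  then show ?thesis
    by (cases "norm (x - y) = 0") (auto simp: mult_le_cancel_right g)
qed

lemma solves_Q_step_antimono:
  assumes Q1: "solves_Q \<phi> grad D y g1 x1" and Q2: "solves_Q \<phi> grad D y g2 x2"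
    and g: "g1 < g2"
  shows "norm (x2 - y) \<le> norm (x1 - y)"
proof -
  have "grad y \<bullet> (x1 - y) + g1 / 2 * (norm (x1 - y))\<^sup>2
      \<le> grad y \<bullet> (x2 - y) + g1 / 2 * (norm (x2 - y))\<^sup>2"
    and "grad y \<bullet> (x2 - y) + g2 / 2 * (norm (x2 - y))\<^sup>2
      \<le> grad y \<bullet> (x1 - y) + g2 / 2 * (norm (x1 - y))\<^sup>2"
    using Q1 Q2 by (simp_all add: solves_Q_def)
  then have "(g2 - g1) * (norm (x2 - y))\<^sup>2 \<le> (g2 - g1) * (norm (x1 - y))\<^sup>2"
    by (simp add: algebra_simps)
  then have "(norm (x2 - y))\<^sup>2 \<le> (norm (x1 - y))\<^sup>2" using g by simp
  then show ?thesis by (rule power2_le_imp_le) simp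
qed

lemma rejected_step_mean_value:
  fixes \<phi> :: "'a::euclidean_space \<Rightarrow> real"
  assumes deriv: "\<And>x. (\<phi> has_derivative (\<lambda>h. grad x \<bullet> h)) (at x)"
    and Q: "solves_Q \<phi> grad D y g x" and y: "y \<in> D" and g: "g > 0" and \<sigma>: "\<sigma> < 1"
    and rejected: "\<phi> y + \<sigma> * (grad y \<bullet> (x - y)) < \<phi> x"
  obtains \<xi> where "\<xi> \<in> closed_segment y x"
    and "(1 - \<sigma>) * g * norm (x - y) \<le> 2 * norm (grad \<xi> - grad y)"
proof -
  define d where "d = x - y"
  have "((\<lambda>t. \<phi> (y + t *\<^sub>R d)) has_derivative (\<lambda>h. grad (y + t *\<^sub>R d) \<bullet> (h *\<^sub>R d)))
      (at t within {0..1})" for t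
  proof -
    have "((\<lambda>t. y + t *\<^sub>R d) has_derivative (\<lambda>h. h *\<^sub>R d)) (at t within {0..1})"
      by (auto intro!: derivative_eq_intros)
    from has_derivative_compose[OF this deriv] show ?thesis by simp
  qed
  then obtain t where t: "t \<in> {0..1}"
    and mvt: "\<phi> (y + 1 *\<^sub>R d) - \<phi> (y + 0 *\<^sub>R d) = grad (y + t *\<^sub>R d) \<bullet> ((1 - 0) *\<^sub>R d)"
    using mvt_very_simple[of 0 1 "\<lambda>t. \<phi> (y + t *\<^sub>R d)"] by fastforce
  define \<xi> where "\<xi> = y + t *\<^sub>R d"
  have "\<xi> = (1 - t) *\<^sub>R y + t *\<^sub>R x" by (simp add: \<xi>_def d_def algebra_simps)
  then have \<xi>_seg: "\<xi> \<in> closed_segment y x" using t by (auto simp: closed_segment_def)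
  have "(1 - \<sigma>) * (g / 2 * (norm d)\<^sup>2) \<le> (1 - \<sigma>) * - (grad y \<bullet> d)"
    using solves_Q_model_nonpos[OF Q y] \<sigma> by (intro mult_left_mono) (auto simp: d_def)
  also have "\<dots> < (grad \<xi> - grad y) \<bullet> d"
    using rejected mvt by (simp add: \<xi>_def d_def inner_diff_left algebra_simps)
  also have "\<dots> \<le> norm (grad \<xi> - grad y) * norm d"
    by (rule norm_cauchy_schwarz)
  finally have less: "((1 - \<sigma>) * g / 2 * norm d) * norm d < norm (grad \<xi> - grad y) * norm d"
    by (simp add: power2_eq_square mult.assoc)
  then have "norm d > 0"
    by (cases "norm d = 0") auto
  with less have "(1 - \<sigma>) * g / 2 * norm d < norm (grad \<xi> - grad y)"
    by simp
  then show ?thesis using that \<xi>_seg by (simp add: d_def)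
qed

lemma continuous_on_UNIV_tendsto_dist_zero:
  fixes f :: "'a::euclidean_space \<Rightarrow> 'b::metric_space"
  assumes f: "continuous_on UNIV f" and y: "bounded (range y)"
    and zy: "(\<lambda>k. dist (z k) (y k)) \<longlonglongrightarrow> 0"
  shows "(\<lambda>k. dist (f (z k)) (f (y k))) \<longlonglongrightarrow> 0"
  unfolding tendsto_iff
proof (intro allI impI)
  fix e :: real assume "e > 0"
  obtain R where R: "\<And>k. norm (y k) \<le> R"
    using y by (auto simp: bounded_iff)
  define T where "T = cball (0::'a) (R + 1)"
  have "uniformly_continuous_on T f"
    unfolding T_def by (rule compact_uniformly_continuous[OF continuous_on_subset[OF f]]) auto
  then obtain \<delta> where "\<delta> > 0"
    and \<delta>: "\<And>u v. u \<in> T \<Longrightarrow> v \<in> T \<Longrightarrow> dist u v < \<delta> \<Longrightarrow> dist (f u) (f v) < e"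
    using \<open>e > 0\<close> unfolding uniformly_continuous_on_def by metis
  have "\<forall>\<^sub>F k in sequentially. dist (z k) (y k) < min \<delta> 1"
    using zy \<open>\<delta> > 0\<close> by (intro order_tendstoD) auto
  then show "\<forall>\<^sub>F k in sequentially. dist (dist (f (z k)) (f (y k))) 0 < e"
  proof eventually_elim
    case (elim k)
    have "norm (z k) \<le> norm (y k) + dist (z k) (y k)"
      using norm_triangle_sub[of "z k" "y k"] by (simp add: dist_norm)
    then have "z k \<in> T" and "y k \<in> T"
      using R[of k] elim by (auto simp: T_def)
    then show ?case using \<delta> elim by simp
  qed
qed

lemma scaled_rejected_steps_tendsto_zero:
  fixes \<phi> :: "'a::euclidean_space \<Rightarrow> real"
  assumes deriv: "\<And>x. (\<phi> has_derivative (\<lambda>h. grad x \<bullet> h)) (at x)"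
    and grad_cont: "continuous_on UNIV grad" and \<sigma>: "\<sigma> < 1"
    and y: "bounded (range y)" and steps: "(\<lambda>k. x k - y k) \<longlonglongrightarrow> 0"
    and rejected: "\<forall>\<^sub>F k in sequentially. y k \<in> D \<and> g k > 0 \<and> solves_Q \<phi> grad D (y k) (g k) (x k)
                     \<and> \<phi> (y k) + \<sigma> * (grad (y k) \<bullet> (x k - y k)) < \<phi> (x k)"
  shows "(\<lambda>k. g k * norm (x k - y k)) \<longlonglongrightarrow> 0"
proof -
  let ?P = "\<lambda>k. y k \<in> D \<and> g k > 0 \<and> solves_Q \<phi> grad D (y k) (g k) (x k)
                \<and> \<phi> (y k) + \<sigma> * (grad (y k) \<bullet> (x k - y k)) < \<phi> (x k)"
  let ?Q = "\<lambda>k \<xi>. \<xi> \<in> closed_segment (y k) (x k)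
                \<and> (1 - \<sigma>) * g k * norm (x k - y k) \<le> 2 * norm (grad \<xi> - grad (y k))"
  have "\<exists>\<xi>. ?P k \<longrightarrow> ?Q k \<xi>" for k
    using rejected_step_mean_value[OF deriv _ _ _ \<sigma>, of D "y k" "g k" "x k"] by blast
  then obtain \<xi> where \<xi>: "\<And>k. ?P k \<Longrightarrow> ?Q k (\<xi> k)"
    using choice[of "\<lambda>k \<xi>. ?P k \<longrightarrow> ?Q k \<xi>"] by blast
  have "(\<lambda>k. \<xi> k - y k) \<longlonglongrightarrow> 0"
  proof (rule Lim_null_comparison[OF _ tendsto_norm_zero[OF steps]])
    show "\<forall>\<^sub>F k in sequentially. norm (\<xi> k - y k) \<le> norm (x k - y k)"
      using rejected by eventually_elim (use \<xi> segment_bound1 in blast)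
  qed
  then have "(\<lambda>k. dist (grad (\<xi> k)) (grad (y k))) \<longlonglongrightarrow> 0"
    by (intro continuous_on_UNIV_tendsto_dist_zero[OF grad_cont y])
      (simp add: dist_norm tendsto_norm_zero_iff)
  then have lim: "(\<lambda>k. 2 / (1 - \<sigma>) * dist (grad (\<xi> k)) (grad (y k))) \<longlonglongrightarrow> 0"
    by (rule tendsto_mult_right_zero)
  have bound: "\<forall>\<^sub>F k in sequentially.
      norm (g k * norm (x k - y k)) \<le> 2 / (1 - \<sigma>) * dist (grad (\<xi> k)) (grad (y k))"
    using rejected
  proof eventually_elim
    case (elim k)
    then have "(1 - \<sigma>) * (g k * norm (x k - y k)) \<le> 2 * dist (grad (\<xi> k)) (grad (y k))"
      using \<xi>[of k] by (simp add: dist_norm mult.assoc)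
    then show ?case using elim \<sigma> by (simp add: field_simps)
  qed
  show ?thesis by (rule Lim_null_comparison[OF bound lim])
qed

lemma M_stationary_of_subproblem_seq:
  assumes D: "closed D" and grad_cont: "continuous_on UNIV grad"
    and Q: "\<And>k. solves_Q \<phi> grad D (y k) (g k) (x k)" and g: "\<And>k. g k > 0"
    and y_lim: "y \<longlonglongrightarrow> wbar" and x_lim: "x \<longlonglongrightarrow> wbar"
    and scaled_steps: "(\<lambda>k. g k *\<^sub>R (x k - y k)) \<longlonglongrightarrow> 0"
  shows "M_stationary grad D wbar"
proof -
  have "x k \<in> D" for k using Q[of k] by (simp add: solves_Q_def)
  then have "wbar \<in> D" by (rule closed_sequentially[OF D _ x_lim])
  have "isCont grad wbar" using grad_cont by (simp add: continuous_on_eq_continuous_at)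
  from isCont_tendsto_compose[OF this y_lim]
  have "(\<lambda>k. - (g k *\<^sub>R (x k - y k)) - grad (y k)) \<longlonglongrightarrow> - 0 - grad wbar"
    by (intro tendsto_diff tendsto_minus scaled_steps)
  also have "(\<lambda>k. - (g k *\<^sub>R (x k - y k)) - grad (y k))
      = (\<lambda>k. g k *\<^sub>R ((y k - (1 / g k) *\<^sub>R grad (y k)) - x k))"
    using g by (intro ext) (simp add: algebra_simps less_imp_neq[symmetric])
  finally have "- grad wbar \<in> lim_normal D wbar"
    using lim_normal_of_proj_seq[OF solves_Q_in_proj[OF Q g] g x_lim] by simp
  with \<open>wbar \<in> D\<close> show ?thesis
    unfolding M_stationary_def by (intro conjI bexI[of _ "- grad wbar"]) simp_all
qed

section \<open>Sliding-window descent\<close>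

definition window_max :: "(nat \<Rightarrow> real) \<Rightarrow> nat \<Rightarrow> nat \<Rightarrow> real" where
  "window_max a m j = Max ((\<lambda>r. a (j - r)) ` {0..min j m})"

lemma window_max_ge: "a j \<le> window_max a m j"
  unfolding window_max_def by (rule Max_ge) (auto intro: image_eqI[where x = 0])

lemma window_max_le: "(\<And>k. k \<le> j \<Longrightarrow> a k \<le> c) \<Longrightarrow> window_max a m j \<le> c"
  unfolding window_max_def by (subst Max_le_iff) auto

lemma window_max_attained:
  obtains k where "j - m \<le> k" "k \<le> j" "a k = window_max a m j"
proof -
  have "window_max a m j \<in> (\<lambda>r. a (j - r)) ` {0..min j m}"
    unfolding window_max_def by (rule Max_in) auto
  then obtain r where "r \<le> min j m" "window_max a m j = a (j - r)" by auto
  then show ?thesis using that[of "j - r"] by auto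
qed

lemma window_max_Suc_le:
  assumes "a (Suc j) \<le> window_max a m j"
  shows "window_max a m (Suc j) \<le> window_max a m j"
  unfolding window_max_def[of a m "Suc j"]
proof (subst Max_le_iff, simp, simp, intro ballI)
  fix b assume "b \<in> (\<lambda>r. a (Suc j - r)) ` {0..min (Suc j) m}"
  then obtain r where r: "r \<le> min (Suc j) m" and b: "b = a (Suc j - r)" by auto
  show "b \<le> window_max a m j"
  proof (cases r)
    case 0
    then show ?thesis using assms b by simp
  next
    case (Suc r')
    then have "b = a (j - r')" "r' \<in> {0..min j m}" using r b by auto
    then show ?thesis unfolding window_max_def by (auto intro!: Max_ge)
  qed
qed

lemma window_descent_le_initial:
  assumes "\<And>j. a (Suc j) \<le> window_max a m j"
  shows "a j \<le> a 0"
proof (induction j rule: less_induct)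
  case (less j)
  show ?case
  proof (cases j)
    case (Suc j')
    then have "window_max a m j' \<le> a 0" using less.IH by (intro window_max_le) simp
    then show ?thesis using assms[of j'] Suc by simp
  qed simp
qed

lemma tendsto_of_lagged_tendsto:
  fixes s :: "nat \<Rightarrow> 'b::metric_space"
  assumes lagged: "\<And>h. h \<in> {1..m + 1} \<Longrightarrow> (\<lambda>j. s (p j - h)) \<longlonglongrightarrow> L"
    and p_ge: "\<And>j. j + m + 1 \<le> p j" and p_le: "\<And>j. p j \<le> j + 2 * m + 1"
  shows "s \<longlonglongrightarrow> L"
  unfolding tendsto_iff
proof (intro allI impI)
  fix r :: real assume "r > 0"
  have "\<forall>\<^sub>F j in sequentially. \<forall>h\<in>{1..m + 1}. dist (s (p j - h)) L < r"
    using lagged \<open>r > 0\<close> by (intro eventually_ball_finite ballI) (auto simp: tendsto_iff)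
  then obtain N where N: "\<forall>j\<ge>N. \<forall>h\<in>{1..m + 1}. dist (s (p j - h)) L < r"
    unfolding eventually_sequentially by blast
  have "dist (s n) L < r" if "N + m \<le> n" for n
  proof -
    define j where "j = n - m"
    have "n + 1 \<le> p j" "p j \<le> n + m + 1" using p_ge[of j] p_le[of j] that by (auto simp: j_def)
    then have "p j - n \<in> {1..m + 1}" "p j - (p j - n) = n" by auto
    with N[rule_format, of j "p j - n"] that show ?thesis by (simp add: j_def)
  qed
  then show "\<forall>\<^sub>F n in sequentially. dist (s n) L < r"
    by (auto simp: eventually_sequentially intro!: exI[of _ "N + m"])
qed

locale window_descent =
  fixes f :: "'a::metric_space \<Rightarrow> real" and S :: "'a set" and x :: "nat \<Rightarrow> 'a"
    and m :: nat and c :: real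
  assumes compact: "compact S" and continuous: "continuous_on S f"
    and x_in: "\<And>j. x j \<in> S" and c_pos: "c > 0"
    and descent: "\<And>j. f (x (Suc j)) \<le> window_max (\<lambda>k. f (x k)) m j - c * (dist (x (Suc j)) (x j))\<^sup>2"
begin

abbreviation M :: "nat \<Rightarrow> real" where
  "M \<equiv> window_max (\<lambda>k. f (x k)) m"

lemma window_max_limit:
  obtains L where "M \<longlonglongrightarrow> L" "\<And>j. L \<le> M j"
proof -
  have "S \<noteq> {}" using x_in by blast
  then obtain z where z: "\<forall>u\<in>S. f z \<le> f u"
    using continuous_attains_inf[OF compact _ continuous] by blast
  have lower: "\<forall>j. f z \<le> M j"
    using order_trans[OF z[rule_format, OF x_in] window_max_ge[of "\<lambda>k. f (x k)"]] by blast
  have "M (Suc j) \<le> M j" for j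
  proof (rule window_max_Suc_le)
    have "0 \<le> c * (dist (x (Suc j)) (x j))\<^sup>2" using c_pos by simp
    then show "f (x (Suc j)) \<le> M j" using descent[of j] by linarith
  qed
  then have "decseq M" by (simp add: decseq_Suc_iff)
  from decseq_convergent[OF this lower] that show ?thesis by blast
qed

lemma tendsto_along_steps:
  assumes L: "M \<longlonglongrightarrow> L" and k: "filterlim k at_top sequentially"
    and next_lim: "(\<lambda>j. f (x (Suc (k j)))) \<longlonglongrightarrow> L"
  shows "(\<lambda>j. dist (x (Suc (k j))) (x (k j))) \<longlonglongrightarrow> 0"
    and "(\<lambda>j. f (x (k j))) \<longlonglongrightarrow> L"
proof -
  have "(\<lambda>j. (M (k j) - f (x (Suc (k j)))) / c) \<longlonglongrightarrow> (L - L) / c"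
    by (intro tendsto_intros filterlim_compose[OF L k] next_lim) (use c_pos in simp)
  then have upper: "(\<lambda>j. (M (k j) - f (x (Suc (k j)))) / c) \<longlonglongrightarrow> 0"
    by simp
  have "(dist (x (Suc (k j))) (x (k j)))\<^sup>2 \<le> (M (k j) - f (x (Suc (k j)))) / c" for j
    using descent[of "k j"] c_pos by (simp add: pos_le_divide_eq mult.commute)
  then have "(\<lambda>j. (dist (x (Suc (k j))) (x (k j)))\<^sup>2) \<longlonglongrightarrow> 0"
    by (intro tendsto_sandwich[OF _ _ tendsto_const upper]) auto
  from tendsto_real_sqrt[OF this]
  show dist_lim: "(\<lambda>j. dist (x (Suc (k j))) (x (k j))) \<longlonglongrightarrow> 0" by simp
  have "uniformly_continuous_on S f"
    by (rule compact_uniformly_continuous[OF continuous compact])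
  from this[unfolded uniformly_continuous_on_sequentially, rule_format,
      of "\<lambda>j. x (Suc (k j))" "\<lambda>j. x (k j)"]
  have "(\<lambda>j. dist (f (x (Suc (k j)))) (f (x (k j)))) \<longlonglongrightarrow> 0"
    using dist_lim x_in by simp
  then have "(\<lambda>j. f (x (Suc (k j))) - (f (x (Suc (k j))) - f (x (k j)))) \<longlonglongrightarrow> L - 0"
    by (intro tendsto_diff next_lim) (simp add: dist_real_def tendsto_rabs_zero_iff)
  then show "(\<lambda>j. f (x (k j))) \<longlonglongrightarrow> L" by simp
qed

lemma steps_tendsto_zero: "(\<lambda>j. dist (x (Suc j)) (x j)) \<longlonglongrightarrow> 0"
proof -
  obtain L where L: "M \<longlonglongrightarrow> L" by (rule window_max_limit)
  have "\<forall>j. \<exists>k. j - m \<le> k \<and> k \<le> j \<and> f (x k) = M j"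
  proof
    fix j
    obtain k where "j - m \<le> k" "k \<le> j" "f (x k) = M j"
      by (rule window_max_attained[of j m "\<lambda>k. f (x k)"])
    then show "\<exists>k. j - m \<le> k \<and> k \<le> j \<and> f (x k) = M j" by blast
  qed
  then obtain l where l: "\<forall>j. j - m \<le> l j \<and> l j \<le> j \<and> f (x (l j)) = M j"
    by (rule choice[THEN exE])
  \<comment> \<open>Going back from the maximising indices p j one index at a time, the values converge
    to L and the steps to 0; the m + 1 indices before p j cover every large index.\<close>
  define p where "p j = l (j + 2 * m + 1)" for j
  have p_ge: "j + m + 1 \<le> p j" and p_le: "p j \<le> j + 2 * m + 1" for j
    using l[rule_format, of "j + 2 * m + 1"] by (auto simp: p_def)
  have p_shift: "filterlim (\<lambda>j. p j - h) at_top sequentially" if "h \<le> m + 1" for h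
  proof (rule filterlim_at_top_mono[OF filterlim_ident always_eventually], intro allI)
    fix j
    show "j \<le> p j - h" using p_ge[of j] that by linarith
  qed
  have value_lim: "(\<lambda>j. f (x (p j - h))) \<longlonglongrightarrow> L" if "h \<le> m + 1" for h
    using that
  proof (induction h)
    case 0
    have "(\<lambda>j. M (j + (2 * m + 1))) \<longlonglongrightarrow> L" by (rule LIMSEQ_ignore_initial_segment[OF L])
    then show ?case using l by (simp add: p_def add.assoc)
  next
    case (Suc h)
    have "Suc (p j - Suc h) = p j - h" for j using p_ge[of j] Suc.prems by simp
    then show ?case
      using tendsto_along_steps(2)[OF L p_shift[OF Suc.prems]] Suc by simp
  qed
  have step_lim: "(\<lambda>j. dist (x (Suc (p j - h))) (x (p j - h))) \<longlonglongrightarrow> 0"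
    if h: "h \<in> {1..m + 1}" for h
  proof -
    obtain h' where h': "h = Suc h'" "h' \<le> m" using h by (cases h) auto
    have "Suc (p j - h) = p j - h'" for j using p_ge[of j] h' by simp
    then have "(\<lambda>j. f (x (Suc (p j - h)))) \<longlonglongrightarrow> L" using value_lim[of h'] h' by simp
    then show ?thesis using tendsto_along_steps(1)[OF L p_shift] h by simp
  qed
  show ?thesis
    using step_lim p_ge p_le
    by (rule tendsto_of_lagged_tendsto[where s = "\<lambda>j. dist (x (Suc j)) (x j)"])
qed

end

section \<open>Runs of the algorithm\<close>

locale spectral_gradient_run =
  fixes \<phi> :: "'a::euclidean_space \<Rightarrow> real" and grad :: "'a \<Rightarrow> 'a"
    and D :: "'a set" and \<tau> \<sigma> gmin gmax :: real and m :: nat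
    and w :: "nat \<Rightarrow> 'a" and wt :: "nat \<Rightarrow> nat \<Rightarrow> 'a" and g0 :: "nat \<Rightarrow> real"
  assumes deriv: "\<And>x. (\<phi> has_derivative (\<lambda>h. grad x \<bullet> h)) (at x)"
    and grad_cont: "continuous_on UNIV grad"
    and D_closed: "closed D"
    and tau: "\<tau> > 1" and sigma: "0 < \<sigma>" "\<sigma> < 1"
    and gmin: "0 < gmin"
    and run: "alg_run \<phi> grad D \<tau> \<sigma> gmin gmax m w wt g0"
    and sublevel: "bounded {v \<in> D. \<phi> v \<le> \<phi> (w 0)}"
begin

abbreviation "accepted_at j i \<equiv> accepted \<phi> grad \<sigma> m w wt j i"
abbreviation "terminates_at j \<equiv> inner_terminates \<phi> grad \<sigma> m w wt j"
abbreviation "reached_at j \<equiv> reached \<phi> grad \<sigma> m w wt j"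
abbreviation "idx j \<equiv> inner_index \<phi> grad \<sigma> m w wt j"
abbreviation "\<gamma> j i \<equiv> gam \<tau> g0 j i"

lemma accepted_at_iff:
  "accepted_at j i \<longleftrightarrow>
     \<phi> (wt j i) \<le> window_max (\<lambda>k. \<phi> (w k)) m j + \<sigma> * (grad (w j) \<bullet> (wt j i - w j))"
  by (simp add: accepted_def window_max_def)

lemma reached_Suc: "reached_at (Suc j) \<longleftrightarrow> reached_at j \<and> terminates_at j"
  unfolding reached_def using less_Suc_eq by auto

lemma
  assumes "reached_at j"
  shows g0_bounds: "g0 j \<in> {gmin..gmax}"
    and trial_solves_Q: "\<And>i. 1 \<le> i \<Longrightarrow> (\<forall>i'. 1 \<le> i' \<and> i' < i \<longrightarrow> \<not> accepted_at j i') \<Longrightarrow>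
                            solves_Q \<phi> grad D (w j) (\<gamma> j i) (wt j i)"
    and next_iterate: "terminates_at j \<Longrightarrow> w (Suc j) = wt j (idx j)"
  using run assms unfolding alg_run_def by blast+

lemma
  assumes "terminates_at j"
  shows inner_index_ge_1: "1 \<le> idx j"
    and accepted_inner_index: "accepted_at j (idx j)"
    and rejected_before_inner_index: "\<And>i. 1 \<le> i \<Longrightarrow> i < idx j \<Longrightarrow> \<not> accepted_at j i"
proof -
  have ex: "\<exists>i. 1 \<le> i \<and> accepted_at j i"
    using assms unfolding inner_terminates_def by auto
  show "1 \<le> idx j" "accepted_at j (idx j)"
    unfolding inner_index_def using LeastI_ex[OF ex] by auto
  show "\<And>i. 1 \<le> i \<Longrightarrow> i < idx j \<Longrightarrow> \<not> accepted_at j i"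
    unfolding inner_index_def using not_less_Least by blast
qed

lemma gam_ge_gmin:
  assumes "reached_at j"
  shows "gmin \<le> \<gamma> j i"
proof -
  have "gmin \<le> g0 j" using g0_bounds[OF assms] by simp
  also have "\<dots> \<le> \<tau> ^ (i - 1) * g0 j"
    using mult_right_mono[of 1 "\<tau> ^ (i - 1)" "g0 j"] tau gmin \<open>gmin \<le> g0 j\<close> by simp
  finally show ?thesis by (simp add: gam_def)
qed

lemma gam_pos: "reached_at j \<Longrightarrow> 0 < \<gamma> j i"
  using gam_ge_gmin gmin by (meson less_le_trans)

lemma gam_Suc: "1 \<le> i \<Longrightarrow> \<gamma> j (Suc i) = \<tau> * \<gamma> j i"
  by (cases i) (auto simp: gam_def)

lemma solves_Q_next_iterate:
  assumes "reached_at j" and "terminates_at j"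
  shows "solves_Q \<phi> grad D (w j) (\<gamma> j (idx j)) (w (Suc j))"
  using trial_solves_Q[OF assms(1) inner_index_ge_1] next_iterate rejected_before_inner_index assms
  by auto

lemma iterate_in_D: "reached_at j \<Longrightarrow> w j \<in> D"
proof (induction j)
  case 0
  then show ?case using run by (simp add: alg_run_def)
next
  case (Suc j)
  then show ?case
    using solves_Q_next_iterate[of j] by (auto simp: reached_Suc solves_Q_def)
qed

lemma rejected_trial_increases:
  "\<not> accepted_at j i \<Longrightarrow> \<phi> (w j) + \<sigma> * (grad (w j) \<bullet> (wt j i - w j)) < \<phi> (wt j i)"
  using window_max_ge[of "\<lambda>k. \<phi> (w k)" j m] unfolding accepted_at_iff by linarith

lemma reached_stall_iff:
  "(\<exists>j. reached_at j \<and> \<not> terminates_at j) \<longleftrightarrow> \<not> (\<forall>j. terminates_at j)"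
proof
  assume "\<not> (\<forall>j. terminates_at j)"
  then obtain j where j: "\<not> terminates_at j" by auto
  define j0 where "j0 = (LEAST j. \<not> terminates_at j)"
  have "\<not> terminates_at j0" unfolding j0_def by (rule LeastI[of _ j]) (rule j)
  moreover have "reached_at j0" unfolding reached_def j0_def using not_less_Least by blast
  ultimately show "\<exists>j. reached_at j \<and> \<not> terminates_at j" by blast
qed auto


lemma stalled_trial:
  assumes reached: "reached_at j" and stalled: "\<not> terminates_at j" and i: "1 \<le> i"
  shows "solves_Q \<phi> grad D (w j) (\<gamma> j i) (wt j i)"
    and "\<phi> (w j) + \<sigma> * (grad (w j) \<bullet> (wt j i - w j)) < \<phi> (wt j i)"
proof -
  have rejected: "\<not> accepted_at j i'" if "1 \<le> i'" for i'
    using stalled that unfolding inner_terminates_def by auto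
  show "solves_Q \<phi> grad D (w j) (\<gamma> j i) (wt j i)"
    using trial_solves_Q[OF reached i] rejected by auto
  show "\<phi> (w j) + \<sigma> * (grad (w j) \<bullet> (wt j i - w j)) < \<phi> (wt j i)"
    by (rule rejected_trial_increases[OF rejected[OF i]])
qed

lemma stalled_trial_steps_tendsto_zero:
  assumes reached: "reached_at j" and stalled: "\<not> terminates_at j"
  shows "(\<lambda>i. wt j i - w j) \<longlonglongrightarrow> 0"
proof -
  have g0_pos: "0 < g0 j" using g0_bounds[OF reached] gmin by auto
  define C where "C = 2 * norm (grad (w j)) / g0 j"
  have "norm (wt j i - w j) \<le> C / \<tau> ^ (i - 1)" if "1 \<le> i" for i
  proof -
    have "\<gamma> j i * norm (wt j i - w j) \<le> 2 * norm (grad (w j))"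
      using stalled_trial(1)[OF reached stalled that] iterate_in_D[OF reached] gam_pos[OF reached]
      by (rule solves_Q_step_bound)
    then have "norm (wt j i - w j) \<le> 2 * norm (grad (w j)) / \<gamma> j i"
      using gam_pos[OF reached, of i] by (simp add: pos_le_divide_eq mult.commute)
    also have "\<dots> = C / \<tau> ^ (i - 1)"
      by (simp add: C_def gam_def mult.commute)
    finally show ?thesis .
  qed
  then have bound: "\<forall>\<^sub>F i in sequentially. norm (wt j i - w j) \<le> C / \<tau> ^ (i - 1)"
    unfolding eventually_sequentially by blast
  have "(\<lambda>i. C / \<tau> ^ (i - 1)) \<longlonglongrightarrow> 0"
    by (rule LIMSEQ_imp_Suc) (simp add: LIMSEQ_divide_realpow_zero[OF tau])
  with bound show ?thesis by (rule Lim_null_comparison)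
qed

lemma stalled_scaled_trial_steps_tendsto_zero:
  assumes reached: "reached_at j" and stalled: "\<not> terminates_at j"
  shows "(\<lambda>i. \<gamma> j i * norm (wt j i - w j)) \<longlonglongrightarrow> 0"
proof -
  have "w j \<in> D \<and> 0 < \<gamma> j i \<and> solves_Q \<phi> grad D (w j) (\<gamma> j i) (wt j i)
      \<and> \<phi> (w j) + \<sigma> * (grad (w j) \<bullet> (wt j i - w j)) < \<phi> (wt j i)" if "1 \<le> i" for i
    using iterate_in_D[OF reached] gam_pos[OF reached] stalled_trial[OF reached stalled that] by blast
  then have rejected: "\<forall>\<^sub>F i in sequentially. w j \<in> D \<and> 0 < \<gamma> j i
      \<and> solves_Q \<phi> grad D (w j) (\<gamma> j i) (wt j i)
      \<and> \<phi> (w j) + \<sigma> * (grad (w j) \<bullet> (wt j i - w j)) < \<phi> (wt j i)"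
    by (rule eventually_sequentiallyI)
  have "bounded (range (\<lambda>_::nat. w j))" by simp
  from scaled_rejected_steps_tendsto_zero[OF deriv grad_cont sigma(2) this
      stalled_trial_steps_tendsto_zero[OF reached stalled] rejected]
  show ?thesis .
qed

lemma stalled_inner_loop:
  assumes reached: "reached_at j" and stalled: "\<not> terminates_at j"
  shows "(\<lambda>i. wt j i) \<longlonglongrightarrow> w j"
    and "M_stationary grad D (w j)"
    and "(\<lambda>i. norm (\<gamma> j i *\<^sub>R (w j - wt j i) + grad (wt j i) - grad (w j))) \<longlonglongrightarrow> 0"
proof -
  have \<gamma>_pos: "0 < \<gamma> j i" for i by (rule gam_pos[OF reached])
  note scaled = stalled_scaled_trial_steps_tendsto_zero[OF reached stalled]
  show trial_lim: "(\<lambda>i. wt j i) \<longlonglongrightarrow> w j"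
    using stalled_trial_steps_tendsto_zero[OF reached stalled] by (simp add: LIM_zero_iff)
  have "isCont grad (w j)" using grad_cont by (simp add: continuous_on_eq_continuous_at)
  from isCont_tendsto_compose[OF this trial_lim]
  have "(\<lambda>i. norm (grad (wt j i) - grad (w j))) \<longlonglongrightarrow> 0"
    by (intro tendsto_norm_zero LIM_zero)
  with scaled have sum_lim:
    "(\<lambda>i. \<gamma> j i * norm (wt j i - w j) + norm (grad (wt j i) - grad (w j))) \<longlonglongrightarrow> 0"
    by (rule tendsto_add_zero)
  have bound: "norm (\<gamma> j i *\<^sub>R (w j - wt j i) + grad (wt j i) - grad (w j))
      \<le> \<gamma> j i * norm (wt j i - w j) + norm (grad (wt j i) - grad (w j))" for i
  proof -
    have "norm (\<gamma> j i *\<^sub>R (w j - wt j i) + grad (wt j i) - grad (w j))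
        \<le> norm (\<gamma> j i *\<^sub>R (w j - wt j i)) + norm (grad (wt j i) - grad (w j))"
      using norm_triangle_ineq[of "\<gamma> j i *\<^sub>R (w j - wt j i)" "grad (wt j i) - grad (w j)"]
      by (simp add: add_diff_eq)
    also have "norm (\<gamma> j i *\<^sub>R (w j - wt j i)) = \<gamma> j i * norm (wt j i - w j)"
      using \<gamma>_pos[of i] by (simp add: norm_minus_commute)
    finally show ?thesis .
  qed
  show "(\<lambda>i. norm (\<gamma> j i *\<^sub>R (w j - wt j i) + grad (wt j i) - grad (w j))) \<longlonglongrightarrow> 0"
    by (rule Lim_null_comparison[OF always_eventually sum_lim]) (simp add: bound)
  have "(\<lambda>k. \<gamma> j (Suc k) *\<^sub>R (wt j (Suc k) - w j)) \<longlonglongrightarrow> 0"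
    using LIMSEQ_Suc[OF scaled]
    by (intro tendsto_norm_zero_cancel[of "\<lambda>k. \<gamma> j (Suc k) *\<^sub>R (wt j (Suc k) - w j)"])
      (simp add: abs_of_pos[OF \<gamma>_pos])
  then show "M_stationary grad D (w j)"
    using stalled_trial(1)[OF reached stalled] \<gamma>_pos LIMSEQ_Suc[OF trial_lim]
    by (intro M_stationary_of_subproblem_seq[OF D_closed grad_cont, of _ "\<lambda>_. w j"]) auto
qed

end

section \<open>Runs whose inner loops all terminate\<close>

locale spectral_gradient_run_terminating = spectral_gradient_run +
  assumes terminates: "\<And>j. inner_terminates \<phi> grad \<sigma> m w wt j"
begin

abbreviation "sublevel_set \<equiv> {v \<in> D. \<phi> v \<le> \<phi> (w 0)}"
abbreviation "gam_step j \<equiv> \<gamma> j (idx j)"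

lemma reached_all: "reached_at j"
  unfolding reached_def using terminates by simp

lemma solves_Q_step: "solves_Q \<phi> grad D (w j) (gam_step j) (w (Suc j))"
  by (rule solves_Q_next_iterate[OF reached_all terminates])

lemma gam_step_pos: "0 < gam_step j"
  by (rule gam_pos[OF reached_all])

lemma sufficient_decrease:
  "\<phi> (w (Suc j)) \<le> window_max (\<lambda>k. \<phi> (w k)) m j - \<sigma> * gmin / 2 * (dist (w (Suc j)) (w j))\<^sup>2"
proof -
  let ?d = "w (Suc j) - w j"
  have "\<phi> (w (Suc j)) \<le> window_max (\<lambda>k. \<phi> (w k)) m j + \<sigma> * (grad (w j) \<bullet> ?d)"
    using accepted_inner_index[OF terminates] next_iterate[OF reached_all terminates]
    by (simp add: accepted_at_iff)
  moreover have "grad (w j) \<bullet> ?d \<le> - (gmin / 2 * (norm ?d)\<^sup>2)"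
  proof -
    have "gmin / 2 * (norm ?d)\<^sup>2 \<le> gam_step j / 2 * (norm ?d)\<^sup>2"
      using gam_ge_gmin[OF reached_all] by (intro mult_right_mono) auto
    then show ?thesis
      using solves_Q_model_nonpos[OF solves_Q_step[of j] iterate_in_D[OF reached_all]] by linarith
  qed
  then have "\<sigma> * (grad (w j) \<bullet> ?d) \<le> \<sigma> * - (gmin / 2 * (norm ?d)\<^sup>2)"
    using sigma by (intro mult_left_mono) auto
  ultimately show ?thesis by (simp add: dist_norm)
qed

lemma iterate_in_sublevel_set: "w j \<in> sublevel_set"
proof -
  have "\<phi> (w (Suc k)) \<le> window_max (\<lambda>k. \<phi> (w k)) m k" for k
  proof -
    have "0 \<le> \<sigma> * gmin / 2 * (dist (w (Suc k)) (w k))\<^sup>2" using sigma gmin by simp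
    then show ?thesis using sufficient_decrease[of k] by linarith
  qed
  then have "\<phi> (w j) \<le> \<phi> (w 0)" by (rule window_descent_le_initial)
  then show ?thesis using iterate_in_D[OF reached_all] by simp
qed

lemma continuous_phi: "continuous_on UNIV \<phi>"
  using deriv has_derivative_continuous continuous_at_imp_continuous_on by blast

lemma compact_sublevel_set: "compact sublevel_set"
proof -
  have "closed {v. \<phi> v \<le> \<phi> (w 0)}"
    by (rule closed_Collect_le[OF continuous_phi continuous_on_const])
  moreover have "sublevel_set = D \<inter> {v. \<phi> v \<le> \<phi> (w 0)}" by blast
  ultimately have "closed sublevel_set" using D_closed by (metis closed_Int)
  then show ?thesis using sublevel by (simp add: compact_eq_bounded_closed)
qed

sublocale window_descent \<phi> sublevel_set w m "\<sigma> * gmin / 2"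
proof
  show "continuous_on sublevel_set \<phi>" by (rule continuous_on_subset[OF continuous_phi]) simp
  show "0 < \<sigma> * gmin / 2" using sigma gmin by simp
qed (fact compact_sublevel_set iterate_in_sublevel_set sufficient_decrease)+

lemma backtracked_trial:
  assumes "2 \<le> idx j"
  shows "solves_Q \<phi> grad D (w j) (\<gamma> j (idx j - 1)) (wt j (idx j - 1))"
    and "\<phi> (w j) + \<sigma> * (grad (w j) \<bullet> (wt j (idx j - 1) - w j)) < \<phi> (wt j (idx j - 1))"
    and "gam_step j = \<tau> * \<gamma> j (idx j - 1)"
    and "norm (w (Suc j) - w j) \<le> norm (wt j (idx j - 1) - w j)"
proof -
  have before: "\<not> accepted_at j i" if "1 \<le> i" "i \<le> idx j - 1" for i
    using rejected_before_inner_index[OF terminates] that assms by simp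
  show Q: "solves_Q \<phi> grad D (w j) (\<gamma> j (idx j - 1)) (wt j (idx j - 1))"
    using trial_solves_Q[OF reached_all] before assms by simp
  show "\<phi> (w j) + \<sigma> * (grad (w j) \<bullet> (wt j (idx j - 1) - w j)) < \<phi> (wt j (idx j - 1))"
    using before assms by (intro rejected_trial_increases) simp
  have "Suc (idx j - 1) = idx j" using assms by simp
  then show step: "gam_step j = \<tau> * \<gamma> j (idx j - 1)"
    using gam_Suc[of "idx j - 1" j] assms by simp
  have "\<gamma> j (idx j - 1) < gam_step j"
    unfolding step using tau gam_pos[OF reached_all] by simp
  then show "norm (w (Suc j) - w j) \<le> norm (wt j (idx j - 1) - w j)"
    by (rule solves_Q_step_antimono[OF Q solves_Q_step])
qed

lemma backtracked_if_large_step: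
  assumes "gmax * norm (w (Suc j) - w j) < gam_step j * norm (w (Suc j) - w j)"
  shows "2 \<le> idx j"
proof (rule ccontr)
  assume "\<not> 2 \<le> idx j"
  then have "gam_step j = g0 j"
    using inner_index_ge_1[OF terminates, of j] by (simp add: gam_def)
  then have "gam_step j * norm (w (Suc j) - w j) \<le> gmax * norm (w (Suc j) - w j)"
    using g0_bounds[OF reached_all, of j] by (intro mult_right_mono) auto
  with assms show False by simp
qed

lemma backtracked_trial_bounds:
  assumes backtracked: "2 \<le> idx j" and B: "norm (grad (w j)) \<le> B"
    and \<epsilon>: "0 < \<epsilon>" "\<epsilon> \<le> gam_step j * norm (w (Suc j) - w j)"
  shows "gam_step j * norm (w (Suc j) - w j) \<le> \<tau> * (\<gamma> j (idx j - 1) * norm (wt j (idx j - 1) - w j))"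
    and "norm (wt j (idx j - 1) - w j) \<le> 2 * B * \<tau> / \<epsilon> * norm (w (Suc j) - w j)"
proof -
  let ?\<beta> = "\<gamma> j (idx j - 1)" and ?t = "norm (wt j (idx j - 1) - w j)"
    and ?d = "norm (w (Suc j) - w j)"
  note trial = backtracked_trial[OF backtracked]
  have \<beta>_pos: "0 < ?\<beta>" by (rule gam_pos[OF reached_all])
  have "gam_step j * ?d = \<tau> * (?\<beta> * ?d)" by (simp add: trial(3))
  also have "\<dots> \<le> \<tau> * (?\<beta> * ?t)" using trial(4) \<beta>_pos tau by simp
  finally show "gam_step j * ?d \<le> \<tau> * (?\<beta> * ?t)" .
  have "?\<beta> * ?t \<le> 2 * norm (grad (w j))"
    by (rule solves_Q_step_bound[OF trial(1) iterate_in_D[OF reached_all] \<beta>_pos])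
  also have "\<dots> \<le> 2 * B" using B by simp
  finally have \<beta>_t: "?\<beta> * ?t \<le> 2 * B" .
  have "\<epsilon> * ?t \<le> (\<tau> * ?\<beta> * ?d) * ?t"
    using \<epsilon>(2) trial(3) by (intro mult_right_mono) simp_all
  also have "\<dots> = \<tau> * ?d * (?\<beta> * ?t)" by (simp add: ac_simps)
  also have "\<dots> \<le> \<tau> * ?d * (2 * B)" using \<beta>_t tau by (intro mult_left_mono) simp_all
  finally show "?t \<le> 2 * B * \<tau> / \<epsilon> * ?d"
    using \<epsilon>(1) by (simp add: pos_le_divide_eq ac_simps)
qed

lemma scaled_steps_tendsto_zero: "(\<lambda>j. gam_step j * norm (w (Suc j) - w j)) \<longlonglongrightarrow> 0"
proof (rule order_tendstoI)
  fix a :: real assume "a < 0"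
  have "0 \<le> gam_step j * norm (w (Suc j) - w j)" for j
    using gam_step_pos[of j] by simp
  then show "\<forall>\<^sub>F j in sequentially. a < gam_step j * norm (w (Suc j) - w j)"
    using \<open>a < 0\<close> by (intro always_eventually allI) (rule less_le_trans)
next
  fix \<epsilon> :: real assume "0 < \<epsilon>"
  show "\<forall>\<^sub>F j in sequentially. gam_step j * norm (w (Suc j) - w j) < \<epsilon>"
  proof (rule ccontr)
    assume "\<not> ?thesis"
    from not_eventually_sequentiallyD[OF this]
    obtain K :: "nat \<Rightarrow> nat" where K: "strict_mono K"
      and "\<forall>k. \<not> gam_step (K k) * norm (w (Suc (K k)) - w (K k)) < \<epsilon>"
      by blast
    then have large: "\<epsilon> \<le> gam_step (K k) * norm (w (Suc (K k)) - w (K k))" for k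
      by (simp add: not_less)
    \<comment> \<open>Along K the steps are short but the parameters blow up, so eventually the accepted
      point was preceded by a rejected trial point that is also close to the iterate.\<close>
    define d where "d k = norm (w (Suc (K k)) - w (K k))" for k
    define x where "x k = wt (K k) (idx (K k) - 1)" for k
    define \<beta> where "\<beta> k = \<gamma> (K k) (idx (K k) - 1)" for k
    have "((\<lambda>j. dist (w (Suc j)) (w j)) \<circ> K) \<longlonglongrightarrow> 0"
      by (rule LIMSEQ_subseq_LIMSEQ[OF steps_tendsto_zero K])
    then have d_lim: "d \<longlonglongrightarrow> 0" by (simp add: d_def[abs_def] o_def dist_norm)
    have "bounded (grad ` sublevel_set)"
      by (intro compact_imp_bounded compact_continuous_image compact_sublevel_set
          continuous_on_subset[OF grad_cont]) simp
    then obtain B where B: "\<And>v. v \<in> sublevel_set \<Longrightarrow> norm (grad v) \<le> B"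
      unfolding bounded_iff by blast
    have "(\<lambda>k. gmax * d k) \<longlonglongrightarrow> 0" by (rule tendsto_mult_right_zero[OF d_lim])
    then have "\<forall>\<^sub>F k in sequentially. gmax * d k < \<epsilon>" using \<open>0 < \<epsilon>\<close> by (rule order_tendstoD)
    then have backtracked: "\<forall>\<^sub>F k in sequentially. 2 \<le> idx (K k)"
    proof eventually_elim
      case (elim k)
      show ?case using elim large[of k] by (intro backtracked_if_large_step) (simp add: d_def)
    qed
    then have trials: "\<forall>\<^sub>F k in sequentially. w (K k) \<in> D \<and> 0 < \<beta> k
        \<and> solves_Q \<phi> grad D (w (K k)) (\<beta> k) (x k)
        \<and> \<phi> (w (K k)) + \<sigma> * (grad (w (K k)) \<bullet> (x k - w (K k))) < \<phi> (x k)"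
    proof eventually_elim
      case (elim k)
      show ?case
        unfolding x_def \<beta>_def
        using backtracked_trial(1,2)[OF elim] iterate_in_D[OF reached_all] gam_pos[OF reached_all]
        by blast
    qed
    note bounds = backtracked_trial_bounds[OF _ B[OF iterate_in_sublevel_set] \<open>0 < \<epsilon>\<close> large]
    from backtracked have larger:
      "\<forall>\<^sub>F k in sequentially. gam_step (K k) * d k \<le> \<tau> * (\<beta> k * norm (x k - w (K k)))"
    proof eventually_elim
      case (elim k)
      show ?case unfolding x_def \<beta>_def d_def by (rule bounds(1)[OF elim])
    qed
    from backtracked have short:
      "\<forall>\<^sub>F k in sequentially. norm (x k - w (K k)) \<le> 2 * B * \<tau> / \<epsilon> * d k"
    proof eventually_elim
      case (elim k)
      show ?case unfolding x_def d_def by (rule bounds(2)[OF elim])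
    qed
    have "(\<lambda>k. 2 * B * \<tau> / \<epsilon> * d k) \<longlonglongrightarrow> 0" by (rule tendsto_mult_right_zero[OF d_lim])
    with short have x_lim: "(\<lambda>k. x k - w (K k)) \<longlonglongrightarrow> 0" by (rule Lim_null_comparison)
    have "range (\<lambda>k. w (K k)) \<subseteq> sublevel_set" using iterate_in_sublevel_set by blast
    then have "bounded (range (\<lambda>k. w (K k)))"
      by (rule bounded_subset[OF compact_imp_bounded[OF compact_sublevel_set]])
    from scaled_rejected_steps_tendsto_zero[OF deriv grad_cont sigma(2) this x_lim trials]
    have "(\<lambda>k. \<tau> * (\<beta> k * norm (x k - w (K k)))) \<longlonglongrightarrow> 0"
      by (rule tendsto_mult_right_zero)
    then have "\<forall>\<^sub>F k in sequentially. \<tau> * (\<beta> k * norm (x k - w (K k))) < \<epsilon>"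
      using \<open>0 < \<epsilon>\<close> by (rule order_tendstoD)
    with larger have "\<forall>\<^sub>F k in sequentially. False"
      by eventually_elim (use large in \<open>fastforce simp: d_def dest: order.trans\<close>)
    then show False by simp
  qed
qed

lemma convergent_subsequence: "\<exists>K::nat \<Rightarrow> nat. strict_mono K \<and> convergent (w \<circ> K)"
  using compact_sublevel_set iterate_in_sublevel_set
  unfolding compact_def convergent_def by blast

lemma limit_point_M_stationary:
  assumes K: "strict_mono K" and lim: "(w \<circ> K) \<longlonglongrightarrow> wbar"
  shows "M_stationary grad D wbar"
    and "(\<lambda>k. gam_step (K k) *\<^sub>R (w (Suc (K k)) - w (K k))) \<longlonglongrightarrow> 0"
proof -
  have "(\<lambda>j. gam_step j *\<^sub>R (w (Suc j) - w j)) \<longlonglongrightarrow> 0"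
    using scaled_steps_tendsto_zero
    by (intro tendsto_norm_zero_cancel[of "\<lambda>j. gam_step j *\<^sub>R (w (Suc j) - w j)"])
      (simp add: abs_of_pos[OF gam_step_pos])
  from LIMSEQ_subseq_LIMSEQ[OF this K]
  show scaled: "(\<lambda>k. gam_step (K k) *\<^sub>R (w (Suc (K k)) - w (K k))) \<longlonglongrightarrow> 0"
    by (simp add: o_def)
  have "((\<lambda>j. w (Suc j) - w j) \<circ> K) \<longlonglongrightarrow> 0"
    using LIMSEQ_subseq_LIMSEQ[OF steps_tendsto_zero K]
    by (simp add: o_def dist_norm tendsto_norm_zero_iff)
  with lim have "(\<lambda>k. w (K k) + (w (Suc (K k)) - w (K k))) \<longlonglongrightarrow> wbar + 0"
    by (intro tendsto_add) (simp_all add: o_def)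
  then have "(\<lambda>k. w (Suc (K k))) \<longlonglongrightarrow> wbar" by simp
  with lim show "M_stationary grad D wbar"
    using solves_Q_step gam_step_pos scaled
    by (intro M_stationary_of_subproblem_seq[OF D_closed grad_cont, of _ "\<lambda>k. w (K k)"])
      (simp_all add: o_def)
qed

end

lemma (in spectral_gradient_run) terminating_inner_loops:
  assumes "\<forall>j. terminates_at j"
  shows "(\<exists>K::nat\<Rightarrow>nat. strict_mono K \<and> convergent (w \<circ> K)) \<and>
    (\<forall>K wbar. strict_mono K \<and> (w \<circ> K) \<longlonglongrightarrow> wbar \<longrightarrow>
      M_stationary grad D wbar \<and>
      (\<lambda>k. \<gamma> (K k) (idx (K k)) *\<^sub>R (w (Suc (K k)) - w (K k))) \<longlonglongrightarrow> 0)"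
proof -
  interpret spectral_gradient_run_terminating \<phi> grad D \<tau> \<sigma> gmin gmax m w wt g0
    using assms by unfold_locales auto
  show ?thesis using convergent_subsequence limit_point_M_stationary by blast
qed

theorem mainTheorem6:
  fixes \<phi> :: "'a::euclidean_space \<Rightarrow> real" and grad :: "'a \<Rightarrow> 'a"
    and D :: "'a set" and \<tau> \<sigma> gmin gmax :: real and m :: nat
    and w :: "nat \<Rightarrow> 'a" and wt :: "nat \<Rightarrow> nat \<Rightarrow> 'a" and g0 :: "nat \<Rightarrow> real"
  assumes deriv: "\<And>x. (\<phi> has_derivative (\<lambda>h. grad x \<bullet> h)) (at x)"
    and grad_cont: "continuous_on UNIV grad"
    and D_closed: "closed D" and D_ne: "D \<noteq> {}"
    and tau: "\<tau> > 1" and sigma: "0 < \<sigma>" "\<sigma> < 1"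
    and gams: "0 < gmin" "gmin \<le> gmax"
    and run: "alg_run \<phi> grad D \<tau> \<sigma> gmin gmax m w wt g0"
    and sublevel: "bounded {v \<in> D. \<phi> v \<le> \<phi> (w 0)}"
  shows
   "((\<exists>j. reached \<phi> grad \<sigma> m w wt j \<and> \<not> inner_terminates \<phi> grad \<sigma> m w wt j)
       \<longleftrightarrow> \<not> (\<forall>j. inner_terminates \<phi> grad \<sigma> m w wt j))
    \<and>
    (\<forall>j. reached \<phi> grad \<sigma> m w wt j \<and> \<not> inner_terminates \<phi> grad \<sigma> m w wt j \<longrightarrow>
        (\<lambda>i. wt j i) \<longlonglongrightarrow> w j \<and>
        M_stationary grad D (w j) \<and>
        (\<lambda>i. norm (gam \<tau> g0 j i *\<^sub>R (w j - wt j i) + grad (wt j i) - grad (w j))) \<longlonglongrightarrow> 0)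
    \<and>
    ((\<forall>j. inner_terminates \<phi> grad \<sigma> m w wt j) \<longrightarrow>
        (\<exists>K::nat\<Rightarrow>nat. strict_mono K \<and> convergent (w \<circ> K)) \<and>
        (\<forall>K wbar. strict_mono K \<and> (w \<circ> K) \<longlonglongrightarrow> wbar \<longrightarrow>
            M_stationary grad D wbar \<and>
            (\<lambda>k. gam \<tau> g0 (K k) (inner_index \<phi> grad \<sigma> m w wt (K k))
                   *\<^sub>R (w (Suc (K k)) - w (K k))) \<longlonglongrightarrow> 0))"
proof -
  interpret spectral_gradient_run \<phi> grad D \<tau> \<sigma> gmin gmax m w wt g0
    using assms by unfold_locales auto
  show ?thesis
    using reached_stall_iff stalled_inner_loop terminating_inner_loops by blast
qed

end
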